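(* Let $E\subset\mathbb{R}^2$ be an arbitrary set. Call a function $v:E\to\mathbb{R}$ a semistatic strategy if there exist functions $h,g:\mathbb{R}\to\mathbb{R}$ such that $v(x,y)=h(x)(y-x)+g(y)$ for all $(x,y)\in E$. Then the set of semistatic strategies on $E$ is closed under pointwise convergence: if $v_n:E\to\mathbb{R}$, $n\in\mathbb{N}$, are semistatic strategies and $v_n(x,y)\to v(x,y)$ for every $(x,y)\in E$, then $v:E\to\mathbb{R}$ is a semistatic strategy.
   Context: Interpretation: $x$ is the price of a stock at date 1 and $y$ its price at date 2; $h$ is the stock position and $g$ the option position. *)

theory Defs
  imports Complex_Main
begin

text \<open>Values of v outside E are irrelevant.\<close>
definition semistatic :: "(real \<times> real) set \<Rightarrow> (real \<times> real \<Rightarrow> real) \<Rightarrow> bool" where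
  "semistatic E v \<longleftrightarrow>
     (\<exists>h g :: real \<Rightarrow> real. \<forall>x y. (x, y) \<in> E \<longrightarrow> v (x, y) = h x * (y - x) + g y)"

end

theory Submission
  imports Defs "HOL-Library.Function_Algebras" "HOL-Library.Indicator_Function"
begin

text \<open>The value h x * (y - x) + g y is a linear functional of the pair (h, g), evaluated at a
  vector attached to the point (x, y). By a Hamel basis argument, a function on E is of this form
  for a single linear functional iff it respects every finite linear relation among the vectors
  attached to the points of E. Each such relation is a finite linear equation in the values of
  the function, and finite linear equations survive pointwise limits.\<close>

instantiation "fun" :: (type, real_vector) real_vector
begin

definition scaleR_fun :: "real \<Rightarrow> ('a \<Rightarrow> 'b) \<Rightarrow> 'a \<Rightarrow> 'b"
  where "scaleR_fun r f = (\<lambda>x. r *\<^sub>R f x)"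

instance
  by standard (simp_all add: scaleR_fun_def fun_eq_iff scaleR_add_right scaleR_add_left)

end

lemma scaleR_fun_apply [simp]: "(r *\<^sub>R f) x = r *\<^sub>R f x"
  by (simp add: scaleR_fun_def)

definition respects_linear_relations ::
    "('i \<Rightarrow> 'v::real_vector) \<Rightarrow> 'i set \<Rightarrow> ('i \<Rightarrow> real) \<Rightarrow> bool" where
  "respects_linear_relations a A f \<longleftrightarrow>
     (\<forall>T c. finite T \<longrightarrow> T \<subseteq> A \<longrightarrow> (\<Sum>i\<in>T. c i *\<^sub>R a i) = 0 \<longrightarrow> (\<Sum>i\<in>T. c i * f i) = 0)"

lemma sum_scaleR_delta_minus:
  fixes x :: "'i \<Rightarrow> 'v::real_vector"
  assumes "finite T" "i \<in> T" "J \<subseteq> T"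
  shows "(\<Sum>j\<in>T. ((if j = i then 1 else 0) - (if j \<in> J then d j else 0)) *\<^sub>R x j)
           = x i - (\<Sum>j\<in>J. d j *\<^sub>R x j)"
proof -
  have delta: "(\<Sum>j\<in>T. (if j = i then 1 else 0) *\<^sub>R x j) = x i"
    using assms(1,2) by (simp add: if_distrib[of "\<lambda>c. c *\<^sub>R _"] cong: if_cong)
  have restrict: "(\<Sum>j\<in>T. (if j \<in> J then d j else 0) *\<^sub>R x j) = (\<Sum>j\<in>J. d j *\<^sub>R x j)"
    by (rule sum.mono_neutral_cong_right) (use assms in auto)
  show ?thesis
    by (simp only: scaleR_diff_left sum_subtractf delta restrict)
qed

lemma respects_linear_relationsD:
  assumes "respects_linear_relations a A f" "i \<in> A"
    and "a i = (\<Sum>j\<in>J. d j *\<^sub>R a j)" "finite J" "J \<subseteq> A"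
  shows "f i = (\<Sum>j\<in>J. d j * f j)"
proof -
  \<comment> \<open>Summing over insert i J with these coefficients is correct even when i \<in> J.\<close>
  define c where "c j = (if j = i then 1 else 0) - (if j \<in> J then d j else 0)" for j
  have fin: "finite (insert i J)" and sub: "J \<subseteq> insert i J" "i \<in> insert i J"
    using assms(4) by auto
  have "(\<Sum>j\<in>insert i J. c j *\<^sub>R a j) = 0"
    unfolding c_def sum_scaleR_delta_minus[OF fin sub(2,1)] using assms(3) by simp
  then have "(\<Sum>j\<in>insert i J. c j * f j) = 0"
    using assms(1,2,5) fin unfolding respects_linear_relations_def by blast
  then show ?thesis
    using sum_scaleR_delta_minus[OF fin sub(2,1), of d f] by (simp add: c_def)
qed

lemma linear_imp_respects_linear_relations:
  assumes "linear G" "\<And>i. i \<in> A \<Longrightarrow> G (a i) = f i"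
  shows "respects_linear_relations a A f"
  unfolding respects_linear_relations_def
proof (intro allI impI)
  fix T c
  assume T: "finite T" "T \<subseteq> A" "(\<Sum>i\<in>T. c i *\<^sub>R a i) = 0"
  have "(\<Sum>i\<in>T. c i * f i) = G (\<Sum>i\<in>T. c i *\<^sub>R a i)"
    using assms T(2)
    by (auto simp: real_vector.linear_sum real_vector.linear_scale intro!: sum.cong)
  then show "(\<Sum>i\<in>T. c i * f i) = 0"
    using T(3) assms(1) by (simp add: real_vector.linear_0)
qed

lemma respects_linear_relations_imp_linear:
  assumes "respects_linear_relations a A f"
  obtains G :: "'v::real_vector \<Rightarrow> real" where "linear G" "\<And>i. i \<in> A \<Longrightarrow> G (a i) = f i"
proof -
  obtain B where B: "B \<subseteq> a ` A" "independent B" "a ` A \<subseteq> span B"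
    by (rule real_vector.maximal_independent_subset)
  define pre where "pre b = (SOME i. i \<in> A \<and> a i = b)" for b
  have pre: "pre b \<in> A \<and> a (pre b) = b" if b: "b \<in> B" for b
  proof -
    obtain i where "i \<in> A" "a i = b"
      using B(1) b by blast
    then show ?thesis
      unfolding pre_def by (rule someI[of "\<lambda>i. i \<in> A \<and> a i = b", OF conjI])
  qed
  define G where "G = construct B (\<lambda>b. f (pre b))"
  have lin: "linear G"
    unfolding G_def using B(2) by (rule real_vector.linear_construct)
  moreover have "G (a i) = f i" if "i \<in> A" for i
  proof -
    have "a i \<in> span B"
      using B(3) that by blast
    then obtain t r where t: "finite t" "t \<subseteq> B" and ai: "a i = (\<Sum>b\<in>t. r b *\<^sub>R b)"
      unfolding real_vector.span_explicit by blast
    have a_pre: "a (pre b) = b" if "b \<in> t" for b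
      using pre t(2) that by blast
    have inj: "inj_on pre t"
      using a_pre by (rule inj_on_inverseI)
    have "a i = (\<Sum>j\<in>pre ` t. r (a j) *\<^sub>R a j)"
      unfolding ai sum.reindex[OF inj] o_def using a_pre by (intro sum.cong) auto
    then have "f i = (\<Sum>j\<in>pre ` t. r (a j) * f j)"
      by (rule respects_linear_relationsD[OF assms that]) (use t pre in auto)
    also have "\<dots> = (\<Sum>b\<in>t. r b * G b)"
      unfolding sum.reindex[OF inj] o_def G_def
      using a_pre t(2) by (intro sum.cong) (auto simp: real_vector.construct_basis[OF B(2)])
    also have "\<dots> = G (a i)"
      unfolding ai by (simp add: real_vector.linear_sum[OF lin] real_vector.linear_scale[OF lin])
    finally show ?thesis ..
  qed
  ultimately show ?thesis using that by blast
qed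

lemma respects_linear_relations_LIMSEQ:
  assumes "\<And>n. respects_linear_relations a A (fs n)"
    and "\<And>i. i \<in> A \<Longrightarrow> (\<lambda>n. fs n i) \<longlonglongrightarrow> f i"
  shows "respects_linear_relations a A f"
  unfolding respects_linear_relations_def
proof (intro allI impI)
  fix T c
  assume T: "finite T" "T \<subseteq> A" "(\<Sum>i\<in>T. c i *\<^sub>R a i) = 0"
  have "(\<lambda>n. \<Sum>i\<in>T. c i * fs n i) \<longlonglongrightarrow> (\<Sum>i\<in>T. c i * f i)"
    using T(2) by (intro tendsto_sum tendsto_mult_left assms(2)) auto
  moreover have "(\<Sum>i\<in>T. c i * fs n i) = 0" for n
    using assms(1)[of n] T unfolding respects_linear_relations_def by blast
  ultimately show "(\<Sum>i\<in>T. c i * f i) = 0"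
    by (simp add: LIMSEQ_const_iff)
qed

text \<open>A pair (h, g) is modelled by a linear functional G on real + real \<Rightarrow> real, with
  h x = G (indicator {Inl x}) and g y = G (indicator {Inr y}).\<close>

fun semistatic_row :: "real \<times> real \<Rightarrow> real + real \<Rightarrow> real" where
  "semistatic_row (x, y) = (y - x) *\<^sub>R indicator {Inl x} + indicator {Inr y}"

lemma linear_semistatic_row:
  "linear G \<Longrightarrow>
     G (semistatic_row (x, y)) = G (indicator {Inl x}) * (y - x) + G (indicator {Inr y})"
  by (simp add: real_vector.linear_add real_vector.linear_scale)

lemma linear_imp_semistatic:
  assumes "linear G" "\<And>p. p \<in> E \<Longrightarrow> G (semistatic_row p) = v p"
  shows "semistatic E v"
  unfolding semistatic_def
proof (intro exI allI impI)
  fix x y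
  assume "(x, y) \<in> E"
  then show "v (x, y) = G (indicator {Inl x}) * (y - x) + G (indicator {Inr y})"
    using assms(2)[of "(x, y)"] linear_semistatic_row[OF assms(1)] by simp
qed

lemma sum_indicator_singleton_mult:
  "finite U \<Longrightarrow> u \<in> U \<Longrightarrow> (\<Sum>u'\<in>U. indicator {u} u' * w u') = (w u :: real)"
  by (simp add: indicator_def if_distrib[of "\<lambda>c. c * _"] cong: if_cong)

lemma semistatic_imp_respects_linear_relations:
  assumes "semistatic E v"
  shows "respects_linear_relations semistatic_row E v"
  unfolding respects_linear_relations_def
proof (intro allI impI)
  fix T c
  assume T: "finite T" "T \<subseteq> E" "(\<Sum>p\<in>T. c p *\<^sub>R semistatic_row p) = 0"
  obtain h g where hg: "\<And>x y. (x, y) \<in> E \<Longrightarrow> v (x, y) = h x * (y - x) + g y"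
    using assms unfolding semistatic_def by blast
  \<comment> \<open>(h, g) need not come from a linear functional, but on the finitely many
    coordinates used by T it does.\<close>
  define U where "U = Inl ` fst ` T \<union> Inr ` snd ` T"
  define G where "G W = (\<Sum>u\<in>U. W u * case_sum h g u)" for W :: "real + real \<Rightarrow> real"
  have lin: "linear G"
    unfolding G_def by (rule linearI) (simp_all add: algebra_simps sum.distrib sum_distrib_left)
  have G_indicator: "G (indicator {u}) = case_sum h g u" if "u \<in> U" for u
    using that T(1) by (simp add: G_def U_def sum_indicator_singleton_mult)
  have G_row: "G (semistatic_row p) = v p" if "p \<in> T" for p
  proof -
    obtain x y where p: "p = (x, y)" by fastforce
    have "Inl x \<in> U" "Inr y \<in> U"
      using that unfolding p U_def by force+
    then show ?thesis
      using that T(2) hg[of x y] linear_semistatic_row[OF lin, of x y]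
      by (auto simp: p G_indicator simp del: semistatic_row.simps)
  qed
  have "respects_linear_relations semistatic_row T v"
    by (rule linear_imp_respects_linear_relations[OF lin]) (rule G_row)
  with T show "(\<Sum>p\<in>T. c p * v p) = 0"
    unfolding respects_linear_relations_def by blast
qed

lemma semistatic_iff_respects_linear_relations:
  "semistatic E v \<longleftrightarrow> respects_linear_relations semistatic_row E v"
proof
  assume "respects_linear_relations semistatic_row E v"
  then obtain G where "linear G" "\<And>p. p \<in> E \<Longrightarrow> G (semistatic_row p) = v p"
    by (rule respects_linear_relations_imp_linear) blast
  then show "semistatic E v"
    by (rule linear_imp_semistatic)
qed (rule semistatic_imp_respects_linear_relations)

theorem theorem2p2:
  fixes E :: "(real \<times> real) set"
    and vs :: "nat \<Rightarrow> real \<times> real \<Rightarrow> real"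
    and v :: "real \<times> real \<Rightarrow> real"
  assumes "\<And>n. semistatic E (vs n)"
    and "\<And>p. p \<in> E \<Longrightarrow> (\<lambda>n. vs n p) \<longlonglongrightarrow> v p"
  shows "semistatic E v"
proof -
  have "respects_linear_relations semistatic_row E (vs n)" for n
    using assms(1) by (simp add: semistatic_iff_respects_linear_relations)
  then have "respects_linear_relations semistatic_row E v"
    using assms(2) by (rule respects_linear_relations_LIMSEQ)
  then show ?thesis
    by (simp add: semistatic_iff_respects_linear_relations)
qed

end
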